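(* Let $p$ be an odd prime and $b,c\in\mathbb Z$ with $p\nmid c(b^2-4c)$. For integers $k$ set $$U(k)=\binom{p-2}{k}_{b,c}+c^{p-1-k}\binom{p-2}{p-1-k}_{b,c}$$ (for $1\le k\le p-2$), and let $D_p(b,c)=\det\left[(i^2+bij+cj^2)^{p-2}\right]_{1\le i,j\le p-1}$. (i) If $U(k)\equiv 0\pmod p$ for some $k\in\{2,\ldots,p-2\}$, then $\left(\frac{D_p(b,c)}{p}\right)=0$. (ii) If $U(k)\not\equiv 0\pmod p$ for all $2\le k\le p-2$, then $$\left(\frac cp\right)^{(p-1)(p-3)/8}\left(\frac{D_p(b,c)}{p}\right)=\left(\frac{4c-b^2+2c\left(\frac{b^2-4c}{p}\right)}{p}\right)\left(\frac{2c\,u_{p-1}(-b,c)-b}{p}\right)\left(\frac{U(p-2)\,U(\frac{p-1}{2})}{p}\right).$$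
   Context: $\left(\frac{\cdot}{p}\right)$ is the Legendre symbol modulo $p$. For $n\in\mathbb N$ and $b,c\in\mathbb Z$, the generalized trinomial coefficients $\binom{n}{k}_{b,c}$ ($k\in\mathbb Z$) are the integers defined by $\left(x+b+\frac{c}{x}\right)^n=\sum_{k\in\mathbb Z}\binom{n}{k}_{b,c}x^k$. For $A,B\in\mathbb Z$, the Lucas sequence $u_n=u_n(A,B)$ is defined by $u_0=0$, $u_1=1$, $u_{n+1}=Au_n-Bu_{n-1}$ for $n\ge1$. *)

theory Defs
  imports "Jordan_Normal_Form.Determinant" "HOL-Number_Theory.Number_Theory"
    "HOL-Computational_Algebra.Polynomial"
begin

text \<open>Generalized trinomial coefficient: coefficient of x^k in (x + b + c/x)^n.
  Since x^n (x + b + c/x)^n = (x^2 + b x + c)^n, it is the coefficient of x^(n+k)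
  in (x^2+bx+c)^n (and 0 if n+k<0).\<close>
definition trinom :: "nat \<Rightarrow> int \<Rightarrow> int \<Rightarrow> int \<Rightarrow> int" where
  "trinom n k b c = (if int n + k < 0 then 0
     else Polynomial.coeff ([:c, b, 1:] ^ n) (nat (int n + k)))"

fun lucas_u :: "int \<Rightarrow> int \<Rightarrow> nat \<Rightarrow> int" where
  "lucas_u A B 0 = 0"
| "lucas_u A B (Suc 0) = 1"
| "lucas_u A B (Suc (Suc n)) = A * lucas_u A B (Suc n) - B * lucas_u A B n"

definition U_fun :: "nat \<Rightarrow> int \<Rightarrow> int \<Rightarrow> nat \<Rightarrow> int" where
  "U_fun p b c k = trinom (p - 2) (int k) b c
      + c ^ (p - 1 - k) * trinom (p - 2) (int (p - 1 - k)) b c"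

definition D_det :: "nat \<Rightarrow> int \<Rightarrow> int \<Rightarrow> int" where
  "D_det p b c = det (mat (p - 1) (p - 1)
     (\<lambda>(i, j). (int (i+1)^2 + b * int (i+1) * int (j+1) + c * int (j+1)^2) ^ (p - 2)))"

end

theory Submission
  imports Defs
begin

text \<open>
  Modulo \<open>p\<close>, Fermat's little theorem lets exponents be reduced modulo \<open>p - 1\<close>. Expanding
  \<open>(i^2 + b i j + c j^2)^(p-2) = \<Sum>\<^sub>m a_m i^m j^(2(p-2)-m)\<close>, where \<open>a_m\<close> are the coefficients of
  \<open>(x^2 + b x + c)^(p-2)\<close>, and merging the exponents \<open>m\<close> and \<open>m + p - 1\<close> factors the matrix
  as \<open>V diag(U(1), ..., U(p-1)) W\<close> with \<open>V = (i^r)\<close> and \<open>W = (j^\<tau>(r))\<close>. The power sums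
  \<open>\<Sum>\<^sub>j j^e\<close> are \<open>-1\<close> or \<open>0\<close> modulo \<open>p\<close> according as \<open>p - 1\<close> divides \<open>e\<close> or not, so \<open>W V\<close> is
  congruent to minus the matrix of an even permutation, whence \<open>D_p(b,c) \<equiv> U(1) \<cdots> U(p-1)\<close>.

  For (ii), the symmetry \<open>c^k a_k = c^(p-2) a_(2(p-2)-k)\<close> gives \<open>U(k) \<equiv> c^(p-1-k) U(p-1-k)\<close>,
  so the factors pair off into powers of \<open>(c/p)\<close>, leaving \<open>U(p-1) = a_(p-2)\<close> and
  \<open>U((p-1)/2)\<close>. Finally \<open>a_(p-2)\<close> and \<open>U(p-2) = 1 + c a_(p-1)\<close> are expressed through the
  Lucas sequence \<open>u = u(-b,c)\<close>: the differential equation \<open>(x^2 + b x + c) f' = (p-2)(2x + b) f\<close>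
  gives a three-term recurrence for the \<open>a_n\<close> which modulo \<open>p\<close> is also satisfied by an explicit
  expression in \<open>u\<close>, and \<open>u_p \<equiv> ((b^2 - 4c)/p)\<close>, \<open>2 u_(p+1) + b u_p \<equiv> -b (mod p)\<close>.
\<close>

section \<open>The Legendre symbol and Fermat's little theorem over the integers\<close>

lemma odd_prime_gt_2: "prime p \<Longrightarrow> odd p \<Longrightarrow> 2 < p"
  for p :: nat
  using prime_ge_2_nat[of p] by (cases "p = 2") auto

lemma Legendre_cases: "Legendre a m \<in> {-1, 0, 1}"
  by (auto simp: Legendre_def)

lemma Legendre_eq_0_iff: "Legendre a m = 0 \<longleftrightarrow> [a = 0] (mod m)"
  by (auto simp: Legendre_def)

lemma Legendre_mult_self: "\<not> [a = 0] (mod m) \<Longrightarrow> Legendre a m * Legendre a m = 1"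
  by (auto simp: Legendre_def)

lemma Legendre_cong:
  assumes "[a = b] (mod m)"
  shows "Legendre a m = Legendre b m"
proof -
  have "[a = 0] (mod m) \<longleftrightarrow> [b = 0] (mod m)" and "QuadRes m a \<longleftrightarrow> QuadRes m b"
    using assms cong_sym cong_trans unfolding QuadRes_def by blast+
  then show ?thesis
    by (simp add: Legendre_def)
qed

lemma Legendre_one:
  assumes "m > 1"
  shows "Legendre 1 m = 1"
proof -
  have "\<not> [1 = 0] (mod m)"
    using assms by (simp add: cong_0_iff zdvd_not_zless)
  moreover have "QuadRes m 1"
    unfolding QuadRes_def by (rule exI[of _ 1]) simp
  ultimately show ?thesis
    by (simp add: Legendre_def)
qed

lemma Legendre_mult:
  assumes "prime p" and "2 < p"
  shows "Legendre (a * b) (int p) = Legendre a (int p) * Legendre b (int p)"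
proof -
  let ?d = "Legendre (a * b) (int p) - Legendre a (int p) * Legendre b (int p)"
  have "[Legendre a (int p) * Legendre b (int p) = (a * b) ^ ((p - 1) div 2)] (mod int p)"
    using cong_mult[OF euler_criterion[OF assms, of a] euler_criterion[OF assms, of b]]
    by (simp add: power_mult_distrib)
  then have "int p dvd ?d"
    using euler_criterion[OF assms, of "a * b"]
    by (metis cong_iff_dvd_diff cong_sym cong_trans)
  moreover have "\<bar>?d\<bar> < int p"
    using Legendre_cases[of "a * b" "int p"] Legendre_cases[of a "int p"] Legendre_cases[of b "int p"]
      assms(2) by auto
  ultimately have "?d = 0"
    using dvd_imp_le_int[of ?d "int p"] by linarith
  then show ?thesis
    by simp
qed

lemma Legendre_prod:
  assumes "prime p" and "2 < p" and "finite A"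
  shows "Legendre (\<Prod>x\<in>A. f x) (int p) = (\<Prod>x\<in>A. Legendre (f x) (int p))"
  using assms(3) by induction (use assms(1,2) in \<open>simp_all add: Legendre_one Legendre_mult\<close>)

lemma Legendre_power:
  assumes "prime p" and "2 < p"
  shows "Legendre (a ^ k) (int p) = Legendre a (int p) ^ k"
  using Legendre_prod[OF assms, of "{..<k}" "\<lambda>_. a"] by simp

lemma fermat_theorem_int:
  assumes "prime p" and "\<not> int p dvd a"
  shows "[a ^ (p - 1) = 1] (mod int p)"
proof -
  interpret residues_prime p "residue_ring (int p)"
    using assms(1) by unfold_locales simp
  have "coprime a (int p)"
    using assms prime_imp_coprime[of "int p" a] by (simp add: ac_simps)
  then show ?thesis
    using euler_theorem totient_prime[OF assms(1)] by simp
qed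

lemma fermat_theorem_int_self:
  assumes "prime p"
  shows "[a ^ p = a] (mod int p)"
proof (cases "int p dvd a")
  case True
  moreover have "int p dvd a ^ p"
    using True assms prime_gt_0_nat dvd_power dvd_trans by blast
  ultimately show ?thesis
    by (simp add: cong_def dvd_eq_mod_eq_0)
next
  case False
  have "[a ^ (p - 1) * a = 1 * a] (mod int p)"
    using fermat_theorem_int[OF assms False] by (intro cong_mult cong_refl)
  moreover have "a ^ (p - 1) * a = a ^ p"
    using assms prime_gt_0_nat by (metis Suc_diff_1 power_Suc2)
  ultimately show ?thesis
    by simp
qed

lemma power_cong_mod_prime_minus_1:
  assumes "prime p" and "\<not> int p dvd a"
  shows "[a ^ e = a ^ (e mod (p - 1))] (mod int p)"
proof -
  have "a ^ e = (a ^ (p - 1)) ^ (e div (p - 1)) * a ^ (e mod (p - 1))"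
    by (metis div_mult_mod_eq power_add power_mult mult.commute)
  also have "[\<dots> = 1 ^ (e div (p - 1)) * a ^ (e mod (p - 1))] (mod int p)"
    using fermat_theorem_int[OF assms] by (intro cong_mult cong_pow cong_refl)
  finally show ?thesis
    by simp
qed

lemma sum_powers_mod_prime_dvd:
  assumes "prime p" and "(p - 1) dvd e"
  shows "[(\<Sum>j<p - 1. (int j + 1) ^ e) = -1] (mod int p)"
proof -
  obtain k where k: "e = (p - 1) * k"
    using assms(2) by blast
  have "[(\<Sum>j<p - 1. (int j + 1) ^ e) = (\<Sum>j<p - 1. 1)] (mod int p)"
  proof (rule cong_sum)
    fix j assume "j \<in> {..<p - 1}"
    then have "\<not> int p dvd int j + 1"
      by (auto dest!: zdvd_imp_le)
    then have "[((int j + 1) ^ (p - 1)) ^ k = 1 ^ k] (mod int p)"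
      by (intro cong_pow fermat_theorem_int[OF assms(1)])
    then show "[(int j + 1) ^ e = 1] (mod int p)"
      by (simp add: k power_mult)
  qed
  also have "(\<Sum>j<p - 1. 1 :: int) = int p - 1"
    using prime_gt_0_nat[OF assms(1)] by (simp add: of_nat_diff)
  also have "[int p - 1 = -1] (mod int p)"
    by (simp add: cong_iff_dvd_diff)
  finally show ?thesis .
qed

lemma sum_powers_mod_prime_not_dvd:
  assumes "prime p" and "\<not> (p - 1) dvd e"
  shows "[(\<Sum>j<p - 1. (int j + 1) ^ e) = 0] (mod int p)"
proof -
  have p1: "p > 1"
    using assms(1) prime_gt_1_nat by blast
  obtain g where g: "residue_primroot p g"
    using prime_primitive_root_exists[OF p1 assms(1)] by blast
  have "bij_betw (\<lambda>i. g ^ i mod p) {..<p - 1} {0<..<p}"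
    using residue_primroot_is_generator[OF p1 g] totient_prime[OF assms(1)]
      totatives_prime[OF assms(1)] by simp
  moreover have "bij_betw Suc {..<p - 1} {0<..<p}"
    by (rule bij_betwI[where g = "\<lambda>t. t - 1"]) auto
  ultimately have "(\<Sum>j<p - 1. (int j + 1) ^ e) = (\<Sum>i<p - 1. int (g ^ i mod p) ^ e)"
    using sum.reindex_bij_betw[of Suc "{..<p - 1}" "{0<..<p}" "\<lambda>t. int t ^ e"]
      sum.reindex_bij_betw[of "\<lambda>i. g ^ i mod p" "{..<p - 1}" "{0<..<p}" "\<lambda>t. int t ^ e"]
    by (simp add: add.commute)
  also have "[\<dots> = (\<Sum>i<p - 1. (int g ^ e) ^ i)] (mod int p)"
  proof (rule cong_sum)
    fix i
    have "[int (g ^ i mod p) ^ e = (int g ^ i) ^ e] (mod int p)"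
      by (intro cong_pow) (simp add: cong_def of_nat_mod zmod_int)
    then show "[int (g ^ i mod p) ^ e = (int g ^ e) ^ i] (mod int p)"
      by (simp add: power_mult[symmetric] mult.commute)
  qed
  finally have sum_geometric: "[(\<Sum>j<p - 1. (int j + 1) ^ e) = (\<Sum>i<p - 1. (int g ^ e) ^ i)] (mod int p)" .
  have "\<not> int p dvd int g"
    using g p1 by (auto simp: residue_primroot_def)
  then have "\<not> int p dvd int g ^ e"
    using assms(1) prime_dvd_power by (metis prime_nat_int_transfer)
  then have "int p dvd (int g ^ e - 1) * (\<Sum>i<p - 1. (int g ^ e) ^ i)"
    using fermat_theorem_int[OF assms(1)] by (simp add: power_diff_1_eq[symmetric] cong_iff_dvd_diff)
  moreover have "\<not> [g ^ e = 1] (mod p)"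
    using assms(2) g by (simp add: ord_divides' residue_primroot_def totient_prime[OF assms(1)])
  then have "\<not> int p dvd int g ^ e - 1"
    by (metis cong_iff_dvd_diff cong_int_iff of_nat_1 of_nat_power)
  ultimately have "int p dvd (\<Sum>i<p - 1. (int g ^ e) ^ i)"
    using assms(1) prime_dvd_mult_iff by (metis prime_nat_int_transfer)
  with sum_geometric show ?thesis
    by (simp add: cong_0_iff cong_dvd_iff)
qed

lemma sum_powers_mod_prime:
  assumes "prime p"
  shows "[(\<Sum>j<p - 1. (int j + 1) ^ e) = (if (p - 1) dvd e then -1 else 0)] (mod int p)"
  using sum_powers_mod_prime_dvd[OF assms] sum_powers_mod_prime_not_dvd[OF assms] by simp

section \<open>Lucas sequences modulo a prime\<close>

definition binomial_transform :: "int \<Rightarrow> nat \<Rightarrow> (nat \<Rightarrow> int) \<Rightarrow> int" where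
  "binomial_transform A n f = (\<Sum>j\<le>n. int (n choose j) * A ^ (n - j) * f j)"

lemma binomial_transform_Suc:
  "binomial_transform A (Suc n) f = A * binomial_transform A n f + binomial_transform A n (f \<circ> Suc)"
proof -
  have "binomial_transform A (Suc n) f = (A ^ Suc n * f 0
       + (\<Sum>j\<le>n. int (n choose Suc j) * A ^ (n - j) * f (Suc j)))
       + (\<Sum>j\<le>n. int (n choose j) * A ^ (n - j) * f (Suc j))"
    unfolding binomial_transform_def
    by (subst sum.atMost_Suc_shift) (simp add: sum.distrib algebra_simps)
  also have "A ^ Suc n * f 0 + (\<Sum>j\<le>n. int (n choose Suc j) * A ^ (n - j) * f (Suc j))
      = (\<Sum>j\<le>Suc n. int (n choose j) * A ^ (Suc n - j) * f j)"
    by (subst sum.atMost_Suc_shift) simp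
  also have "\<dots> = A * binomial_transform A n f"
    unfolding binomial_transform_def sum_distrib_left
    by (simp add: Suc_diff_le mult_ac)
  finally show ?thesis
    unfolding binomial_transform_def by simp
qed

lemma binomial_transform_prime_cong:
  assumes "prime p"
  shows "[binomial_transform A p f = A ^ p * f 0 + f p] (mod int p)"
proof -
  have p0: "p > 0"
    using assms prime_gt_0_nat by blast
  have "[binomial_transform A p f
      = (\<Sum>j\<le>p. (if j = 0 then A ^ p * f 0 else 0) + (if j = p then f p else 0))] (mod int p)"
    unfolding binomial_transform_def
  proof (rule cong_sum)
    fix j assume j: "j \<in> {..p}"
    show "[int (p choose j) * A ^ (p - j) * f j
        = (if j = 0 then A ^ p * f 0 else 0) + (if j = p then f p else 0)] (mod int p)"
    proof (cases "j = 0 \<or> j = p")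
      case False
      then have "p dvd (p choose j)"
        using assms j by (intro dvd_choose_prime) auto
      then show ?thesis
        using False by (simp add: cong_0_iff)
    qed (use p0 in auto)
  qed
  then show ?thesis
    by (simp add: sum.distrib)
qed

text \<open>By the binomial theorem \<open>(A + \<surd>D)^n = rational_part A D n + surd_part A D n * \<surd>D\<close>.
  For \<open>D = A^2 - 4B\<close> these are \<open>2^(n-1) v_n\<close> and \<open>2^(n-1) u_n\<close>, where \<open>v_n = 2 u_(n+1) - A u_n\<close>
  is the companion Lucas sequence.\<close>

definition surd_part :: "int \<Rightarrow> int \<Rightarrow> nat \<Rightarrow> int" where
  "surd_part A D n = binomial_transform A n (\<lambda>j. if odd j then D ^ (j div 2) else 0)"

definition rational_part :: "int \<Rightarrow> int \<Rightarrow> nat \<Rightarrow> int" where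
  "rational_part A D n = binomial_transform A n (\<lambda>j. if even j then D ^ (j div 2) else 0)"

lemma surd_part_Suc: "surd_part A D (Suc n) = A * surd_part A D n + rational_part A D n"
proof -
  have "(\<lambda>j. if odd j then D ^ (j div 2) else 0) \<circ> Suc = (\<lambda>j. if even j then D ^ (j div 2) else 0)"
    by (rule ext) (auto elim!: evenE)
  then show ?thesis
    unfolding surd_part_def rational_part_def binomial_transform_Suc by simp
qed

lemma rational_part_Suc: "rational_part A D (Suc n) = A * rational_part A D n + D * surd_part A D n"
proof -
  have "(\<lambda>j. if even j then D ^ (j div 2) else 0) \<circ> Suc
      = (\<lambda>j. D * (if odd j then D ^ (j div 2) else 0))"
    by (rule ext) (auto elim!: oddE)
  moreover have "binomial_transform A n (\<lambda>j. D * (if odd j then D ^ (j div 2) else 0))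
      = D * surd_part A D n"
    unfolding surd_part_def binomial_transform_def sum_distrib_left
    by (rule sum.cong) auto
  ultimately show ?thesis
    unfolding rational_part_def binomial_transform_Suc by (simp add: surd_part_def)
qed

lemma lucas_u_binomial:
  "2 * surd_part A (A\<^sup>2 - 4 * B) n = 2 ^ n * lucas_u A B n \<and>
   2 * rational_part A (A\<^sup>2 - 4 * B) n = 2 ^ n * (2 * lucas_u A B (Suc n) - A * lucas_u A B n)"
proof (induction n)
  case 0
  then show ?case
    by (simp add: surd_part_def rational_part_def binomial_transform_def)
next
  case (Suc n)
  have "2 * rational_part A (A\<^sup>2 - 4 * B) (Suc n)
      = A * (2 * rational_part A (A\<^sup>2 - 4 * B) n) + (A\<^sup>2 - 4 * B) * (2 * surd_part A (A\<^sup>2 - 4 * B) n)"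
    unfolding rational_part_Suc by (simp add: algebra_simps)
  also have "\<dots> = A * (2 ^ n * (2 * lucas_u A B (Suc n) - A * lucas_u A B n))
      + (A\<^sup>2 - 4 * B) * (2 ^ n * lucas_u A B n)"
    using Suc.IH by simp
  also have "\<dots> = 2 ^ Suc n * (2 * lucas_u A B (Suc (Suc n)) - A * lucas_u A B (Suc n))"
    by (simp add: algebra_simps power2_eq_square)
  finally show ?case
    using Suc.IH unfolding surd_part_Suc by (simp add: algebra_simps)
qed

lemma lucas_u_prime_cong:
  assumes "prime p" and "odd p"
  shows "[lucas_u A B p = (A\<^sup>2 - 4 * B) ^ ((p - 1) div 2)] (mod int p)"
    and "[2 * lucas_u A B (Suc p) - A * lucas_u A B p = A] (mod int p)"
proof -
  let ?D = "A\<^sup>2 - 4 * B"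
  have cancel_2: "[x = y] (mod int p)" if "[2 ^ p * x = 2 * y] (mod int p)" for x y :: int
  proof -
    have "[2 * x = 2 ^ p * x] (mod int p)"
      using fermat_theorem_int_self[OF assms(1), of 2] by (intro cong_mult cong_refl) (rule cong_sym)
    then have "[2 * x = 2 * y] (mod int p)"
      using that by (rule cong_trans)
    moreover have "coprime 2 (int p)"
      using assms(2) by simp
    ultimately show ?thesis
      using cong_mult_lcancel by blast
  qed
  have "p div 2 = (p - 1) div 2"
    using assms(2) by (auto elim: oddE)
  then have "[surd_part A ?D p = ?D ^ ((p - 1) div 2)] (mod int p)"
    using binomial_transform_prime_cong[OF assms(1), of A "\<lambda>j. if odd j then ?D ^ (j div 2) else 0"]
      assms(2) unfolding surd_part_def by simp
  then have "[2 * surd_part A ?D p = 2 * ?D ^ ((p - 1) div 2)] (mod int p)"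
    by (rule cong_scalar_left)
  then have "[2 ^ p * lucas_u A B p = 2 * ?D ^ ((p - 1) div 2)] (mod int p)"
    using lucas_u_binomial[of A B p] by simp
  then show "[lucas_u A B p = ?D ^ ((p - 1) div 2)] (mod int p)"
    by (rule cancel_2)
  have "[rational_part A ?D p = A ^ p] (mod int p)"
    using binomial_transform_prime_cong[OF assms(1), of A "\<lambda>j. if even j then ?D ^ (j div 2) else 0"]
      assms(2) unfolding rational_part_def by simp
  then have "[rational_part A ?D p = A] (mod int p)"
    using fermat_theorem_int_self[OF assms(1)] by (rule cong_trans)
  then have "[2 * rational_part A ?D p = 2 * A] (mod int p)"
    by (rule cong_scalar_left)
  then have "[2 ^ p * (2 * lucas_u A B (Suc p) - A * lucas_u A B p) = 2 * A] (mod int p)"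
    using lucas_u_binomial[of A B p] by simp
  then show "[2 * lucas_u A B (Suc p) - A * lucas_u A B p = A] (mod int p)"
    by (rule cancel_2)
qed

section \<open>Powers of the quadratic \<open>x\<^sup>2 + b x + c\<close>\<close>

lemma degree_trinomial_power: "degree ([:c, b, 1:] ^ N) = 2 * N"
  for b c :: "'a :: idom"
  by (simp add: degree_power_eq)

lemma coeff_trinomial_power_top: "Polynomial.coeff ([:c, b, 1:] ^ N) (2 * N) = 1"
  for b c :: "'a :: idom"
  using lead_coeff_power[of "[:c, b, 1:]" N] by (simp add: degree_trinomial_power)

lemma coeff_trinomial_power_eq_0: "2 * N < m \<Longrightarrow> Polynomial.coeff ([:c, b, 1:] ^ N) m = 0"
  for b c :: "'a :: idom"
  by (simp add: coeff_eq_0 degree_trinomial_power)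

lemma trinom_of_nat: "trinom N (int k) b c = Polynomial.coeff ([:c, b, 1:] ^ N) (N + k)"
  unfolding trinom_def by (simp add: nat_add_distrib)

lemma pderiv_trinomial_power:
  "[:c, b, 1:] * pderiv ([:c, b, 1:] ^ N) = [:b, 2:] * smult (of_nat N) ([:c, b, 1:] ^ N)"
  for b c :: "'a :: idom"
proof (cases N)
  case (Suc m)
  have "pderiv [:c, b, 1:] = [:b, 2:]"
    by (simp add: pderiv_pCons)
  then show ?thesis
    unfolding Suc pderiv_power_Suc by (simp only: mult_smult_left mult_smult_right power_Suc mult_ac)
qed simp

text \<open>Comparing coefficients in \<open>pderiv_trinomial_power\<close> gives a three-term recurrence for the
  coefficients \<open>a_n\<close> of \<open>(x^2 + b x + c)^N\<close>.\<close>

lemma trinomial_coeff_rec_0: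
  fixes b c :: int
  shows "c * Polynomial.coeff ([:c, b, 1:] ^ N) 1 = int N * b * Polynomial.coeff ([:c, b, 1:] ^ N) 0"
  using arg_cong[OF pderiv_trinomial_power[of c b N], where f = "\<lambda>q. Polynomial.coeff q 0"]
  by (simp add: mult_pCons_left coeff_pderiv algebra_simps)

lemma trinomial_coeff_rec:
  fixes b c :: int and N n :: nat
  defines "a \<equiv> Polynomial.coeff ([:c, b, 1:] ^ N)"
  shows "c * int (n + 2) * a (n + 2) + b * int (n + 1) * a (n + 1) + int n * a n
           = int N * (b * a (n + 1) + 2 * a n)"
  using arg_cong[OF pderiv_trinomial_power[of c b N], where f = "\<lambda>q. Polynomial.coeff q (Suc n)"]
  unfolding a_def by (cases n) (simp_all add: mult_pCons_left coeff_pderiv algebra_simps)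

lemma pcompose_power: "pcompose (p ^ n) q = pcompose p q ^ n"
  by (induction n) (simp_all add: pcompose_mult one_pCons pcompose_pCons)

lemma trinomial_pcompose_scale: "pcompose [:c, b, 1:] [:0, x:] = [:c, b * x, x\<^sup>2:]"
  for b c x :: "'a :: comm_ring_1"
  by (simp add: pcompose_pCons power2_eq_square algebra_simps)

text \<open>Substituting \<open>x \<mapsto> c x\<close> turns \<open>x^2 + b x + c\<close> into \<open>c\<close> times its reflection.\<close>

lemma trinomial_coeff_reflect:
  fixes b c :: "'a :: idom"
  assumes "m \<le> 2 * N"
  shows "c ^ m * Polynomial.coeff ([:c, b, 1:] ^ N) m
           = c ^ N * Polynomial.coeff ([:c, b, 1:] ^ N) (2 * N - m)"
proof -
  have "pcompose [:c, b, 1:] [:0, c:] = smult c (reflect_poly [:c, b, 1:])"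
    unfolding trinomial_pcompose_scale by (simp add: reflect_poly_def power2_eq_square)
  then have "pcompose ([:c, b, 1:] ^ N) [:0, c:] = smult (c ^ N) (reflect_poly ([:c, b, 1:] ^ N))"
    unfolding pcompose_power reflect_poly_power by (simp add: smult_power)
  then show ?thesis
    using assms coeff_pcompose_linear[of "[:c, b, 1:] ^ N" c m]
    by (simp add: coeff_reflect_poly degree_trinomial_power)
qed

lemma trinomial_form_power:
  fixes x y b c :: "'a :: idom"
  assumes "x \<noteq> 0" and "c \<noteq> 0"
  shows "(x\<^sup>2 + b * x * y + c * y\<^sup>2) ^ N
           = (\<Sum>m\<le>2 * N. Polynomial.coeff ([:c, b, 1:] ^ N) m * x ^ m * y ^ (2 * N - m))"
proof -
  define S where "S = pcompose ([:c, b, 1:] ^ N) [:0, x:]"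
  have S: "S = [:c, b * x, x\<^sup>2:] ^ N"
    unfolding S_def pcompose_power trinomial_pcompose_scale ..
  have degree_S: "degree S = 2 * N"
    unfolding S using assms by (simp add: degree_power_eq)
  have "Polynomial.coeff S 0 \<noteq> 0"
    unfolding S using assms(2) by (simp add: coeff_0_power)
  then have "poly (reflect_poly S) y = (\<Sum>n\<le>2 * N. Polynomial.coeff (reflect_poly S) n * y ^ n)"
    unfolding poly_altdef by (simp add: degree_S)
  also have "\<dots> = (\<Sum>n\<le>2 * N. x ^ (2 * N - n) * Polynomial.coeff ([:c, b, 1:] ^ N) (2 * N - n) * y ^ n)"
    using coeff_pcompose_linear[of "[:c, b, 1:] ^ N" x] unfolding S_def[symmetric]
    by (intro sum.cong) (auto simp: coeff_reflect_poly degree_S)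
  also have "\<dots> = (\<Sum>m\<le>2 * N. Polynomial.coeff ([:c, b, 1:] ^ N) m * x ^ m * y ^ (2 * N - m))"
    by (rule sum.reindex_bij_witness[of _ "\<lambda>n. 2 * N - n" "\<lambda>n. 2 * N - n"]) (auto simp: mult_ac)
  finally show ?thesis
    unfolding S reflect_poly_power poly_power using assms(1)
    by (simp add: reflect_poly_def power2_eq_square algebra_simps)
qed

section \<open>A closed form for the coefficients modulo \<open>p\<close>\<close>

text \<open>For \<open>n \<le> p - 1\<close> and the coefficients \<open>a_n\<close> of \<open>(x^2 + b x + c)^(p-2)\<close> we get
  \<open>(b^2 - 4c) c^(n+1) a_n \<equiv> lucas_coeff_form b c n (mod p)\<close>: both sides satisfy the same
  three-term recurrence modulo \<open>p\<close>.\<close>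

definition lucas_coeff_form :: "int \<Rightarrow> int \<Rightarrow> nat \<Rightarrow> int" where
  "lucas_coeff_form b c n = int (n + 1) * (2 * lucas_u (-b) c (n + 3) + b * lucas_u (-b) c (n + 2))
     - 2 * c * lucas_u (-b) c (n + 1)"

lemma lucas_coeff_form_rec:
  "int (n + 2) * lucas_coeff_form b c (n + 2) + int (n + 3) * b * lucas_coeff_form b c (n + 1)
     + int (n + 4) * c * lucas_coeff_form b c n = 0"
proof -
  define v where "v k = lucas_u (-b) c (n + k)" for k
  have v_rec: "v (k + 2) = - b * v (k + 1) - c * v k" for k
    unfolding v_def by (simp add: numeral_2_eq_2)
  have v5: "v 5 = - b * v 4 - c * v 3" and v4: "v 4 = - b * v 3 - c * v 2"
    and v3: "v 3 = - b * v 2 - c * v 1"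
    using v_rec[of 3] v_rec[of 2] v_rec[of 1] by (simp_all add: eval_nat_numeral)
  have shift: "lucas_u (-b) c (n + j + k) = v (j + k)" for j k
    unfolding v_def by (simp only: add.assoc)
  have F2: "lucas_coeff_form b c (n + 2) = (int n + 3) * (2 * v 5 + b * v 4) - 2 * c * v 3"
    and F1: "lucas_coeff_form b c (n + 1) = (int n + 2) * (2 * v 4 + b * v 3) - 2 * c * v 2"
    and F0: "lucas_coeff_form b c n = (int n + 1) * (2 * v 3 + b * v 2) - 2 * c * v 1"
    unfolding lucas_coeff_form_def shift by (simp_all del: lucas_u.simps add: v_def eval_nat_numeral)
  show ?thesis
    unfolding F2 F1 F0 v5 v4 v3 by (simp add: algebra_simps)
qed

lemma lucas_coeff_form_0: "lucas_coeff_form b c 0 = b\<^sup>2 - 4 * c"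
  by (simp add: lucas_coeff_form_def numeral_3_eq_3 numeral_2_eq_2 power2_eq_square algebra_simps)

lemma lucas_coeff_form_1: "lucas_coeff_form b c 1 = - 2 * b * (b\<^sup>2 - 4 * c)"
  by (simp add: lucas_coeff_form_def eval_nat_numeral power2_eq_square algebra_simps)

text \<open>The defect \<open>D X c^2 Q2 - F2\<close> of the closed form satisfies a recurrence whose
  inhomogeneous term carries the factor \<open>N + 2\<close>, which is \<open>p\<close> for \<open>N = p - 2\<close>.\<close>

lemma trinomial_lucas_defect_rec:
  fixes b c D N X m Q0 Q1 Q2 F0 F1 F2 :: int
  assumes "c * (m + 2) * Q2 + b * (m + 1) * Q1 + m * Q0 = N * (b * Q1 + 2 * Q0)"
    and "(m + 2) * F2 + (m + 3) * b * F1 + (m + 4) * c * F0 = 0"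
  shows "(m + 2) * (D * (X * c * c) * Q2 - F2)
           = (N - m - 1) * b * (D * (X * c) * Q1 - F1) + (2 * N - m) * c * (D * X * Q0 - F0)
             + (N + 2) * (b * F1 + 2 * c * F0)"
proof -
  have Q2: "c * (m + 2) * Q2 = N * (b * Q1 + 2 * Q0) - b * (m + 1) * Q1 - m * Q0"
    and F2: "(m + 2) * F2 = - ((m + 3) * b * F1 + (m + 4) * c * F0)"
    using assms by linarith+
  have "(m + 2) * (D * (X * c * c) * Q2 - F2) = D * X * c * (c * (m + 2) * Q2) - (m + 2) * F2"
    by (simp add: algebra_simps)
  also have "\<dots> = D * X * c * (N * (b * Q1 + 2 * Q0) - b * (m + 1) * Q1 - m * Q0)
                 + ((m + 3) * b * F1 + (m + 4) * c * F0)"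
    unfolding Q2 F2 by simp
  finally show ?thesis
    by (simp add: algebra_simps)
qed

lemma trinomial_coeff_lucas_cong:
  fixes b c :: int
  assumes "prime p" and "odd p" and "\<not> int p dvd c" and "n \<le> p - 1"
  shows "[(b\<^sup>2 - 4 * c) * c ^ (n + 1) * Polynomial.coeff ([:c, b, 1:] ^ (p - 2)) n
           = lucas_coeff_form b c n] (mod int p)"
proof -
  define D where "D = b\<^sup>2 - 4 * c"
  define a where "a = Polynomial.coeff ([:c, b, 1:] ^ (p - 2))"
  define F where "F = lucas_coeff_form b c"
  define E where "E n = D * c ^ (n + 1) * a n - F n" for n
  define N where "N = int p - 2"
  have p2: "p > 2"
    using odd_prime_gt_2[OF assms(1,2)] .
  have N: "int (p - 2) = N"
    using p2 unfolding N_def by simp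
  have E0: "E 0 = D * c * a 0 - D"
    unfolding E_def F_def by (simp add: lucas_coeff_form_0 D_def)
  have "int p dvd E n" if "n \<le> p - 1" for n
    using that
  proof (induction n rule: less_induct)
    case (less n)
    consider "n = 0" | "n = 1" | k where "n = k + 2"
      by (cases n; cases "n - 1") auto
    then show ?case
    proof cases
      case 1
      have "p - 1 = Suc (p - 2)"
        using p2 by simp
      then have "E 0 = D * (c ^ (p - 1) - 1)"
        unfolding E0 a_def by (simp add: coeff_0_power algebra_simps)
      then show ?thesis
        using 1 fermat_theorem_int[OF assms(1,3)] by (simp add: cong_iff_dvd_diff)
    next
      case 2
      have rec: "c * a 1 = N * b * a 0"
        using trinomial_coeff_rec_0[where b = b and c = c and N = "p - 2"] unfolding a_def N .
      have "E 1 = D * c * (c * a 1) + 2 * b * D"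
        unfolding E_def F_def D_def lucas_coeff_form_1 by (simp add: power2_eq_square algebra_simps)
      then have "E 1 = N * b * E 0 + int p * b * D"
        unfolding E0 rec N_def by (simp add: algebra_simps)
      moreover have "int p dvd E 0"
        using less 2 by simp
      ultimately show ?thesis
        using 2 by simp
    next
      case 3
      have IH: "int p dvd E k" "int p dvd E (k + 1)"
        using less 3 by simp_all
      have rec: "c * (int k + 2) * a (k + 2) + b * (int k + 1) * a (k + 1) + int k * a k
          = N * (b * a (k + 1) + 2 * a k)"
        using trinomial_coeff_rec[where b = b and c = c and N = "p - 2" and n = k]
        unfolding a_def N by (simp add: ac_simps)
      have F_rec: "(int k + 2) * F (k + 2) + (int k + 3) * b * F (k + 1) + (int k + 4) * c * F k = 0"
        using lucas_coeff_form_rec[of k b c] unfolding F_def by (simp add: ac_simps)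
      have "c ^ (k + 2 + 1) = c ^ (k + 1) * c * c" and "c ^ (k + 1 + 1) = c ^ (k + 1) * c"
        by simp_all
      then have defect: "(int k + 2) * E (k + 2) = (N - int k - 1) * b * E (k + 1)
          + (2 * N - int k) * c * E k + (N + 2) * (b * F (k + 1) + 2 * c * F k)"
        unfolding E_def by (simp only:) (rule trinomial_lucas_defect_rec[OF rec F_rec])
      have "int p dvd (N - int k - 1) * b * E (k + 1)" and "int p dvd (2 * N - int k) * c * E k"
        and "int p dvd (N + 2) * (b * F (k + 1) + 2 * c * F k)"
        using IH by (simp_all add: N_def)
      then have "int p dvd (int k + 2) * E (k + 2)"
        unfolding defect by (simp add: dvd_add)
      moreover have "\<not> int p dvd int k + 2"
        using 3 less.prems p2 by (auto dest!: zdvd_imp_le)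
      ultimately show ?thesis
        using 3 assms(1) prime_dvd_mult_iff by (metis prime_nat_int_transfer)
    qed
  qed
  then show ?thesis
    using assms(4) unfolding E_def D_def a_def F_def by (simp add: cong_iff_dvd_diff)
qed

section \<open>The numbers \<open>U(k)\<close>\<close>

lemma U_fun_p_minus_1:
  assumes "p \<ge> 2"
  shows "U_fun p b c (p - 1) = Polynomial.coeff ([:c, b, 1:] ^ (p - 2)) (p - 2)"
proof -
  have "Polynomial.coeff ([:c, b, 1:] ^ (p - 2)) (p - 2 + (p - 1)) = 0"
    using assms by (intro coeff_trinomial_power_eq_0) simp
  then show ?thesis
    unfolding U_fun_def trinom_of_nat by simp
qed

lemma U_fun_p_minus_2:
  assumes "p \<ge> 3"
  shows "U_fun p b c (p - 2) = 1 + c * Polynomial.coeff ([:c, b, 1:] ^ (p - 2)) (p - 1)"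
proof -
  have "p - 1 - (p - 2) = 1" and "p - 2 + 1 = p - 1"
    using assms by simp_all
  then show ?thesis
    using coeff_trinomial_power_top[of c b "p - 2"]
    unfolding U_fun_def trinom_of_nat by (simp add: mult_2)
qed

lemma U_fun_reflect_cong:
  assumes "prime p" and "\<not> int p dvd c" and "k \<le> p - 1"
  shows "[U_fun p b c k = c ^ (p - 1 - k) * U_fun p b c (p - 1 - k)] (mod int p)"
proof -
  define t where "t j = trinom (p - 2) (int j) b c" for j
  have "p - 1 - (p - 1 - k) = k"
    using assms(3) by simp
  then have "c ^ (p - 1 - k) * U_fun p b c (p - 1 - k)
      = c ^ (p - 1 - k) * t (p - 1 - k) + (c ^ (p - 1 - k) * c ^ k) * t k"
    unfolding U_fun_def t_def by (simp add: algebra_simps)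
  also have "\<dots> = c ^ (p - 1 - k) * t (p - 1 - k) + c ^ (p - 1) * t k"
    using assms(3) by (metis le_add_diff_inverse2 power_add)
  also have "[\<dots> = c ^ (p - 1 - k) * t (p - 1 - k) + 1 * t k] (mod int p)"
    using fermat_theorem_int[OF assms(1,2)] by (intro cong_add cong_mult cong_refl)
  also have "c ^ (p - 1 - k) * t (p - 1 - k) + 1 * t k = U_fun p b c k"
    by (simp add: U_fun_def t_def)
  finally show ?thesis
    by (rule cong_sym)
qed

lemma U_fun_eq_coeff_sum:
  fixes b c :: int
  assumes "c \<noteq> 0" and "p \<ge> 3" and "r < p - 1"
  shows "U_fun p b c (r + 1) = Polynomial.coeff ([:c, b, 1:] ^ (p - 2)) r
           + Polynomial.coeff ([:c, b, 1:] ^ (p - 2)) (r + (p - 1))"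
proof -
  define a where "a = Polynomial.coeff ([:c, b, 1:] ^ (p - 2))"
  define N where "N = p - 2"
  have r: "r \<le> N"
    using assms unfolding N_def by simp
  have "c ^ r * a r = c ^ N * a (2 * N - r)"
    using trinomial_coeff_reflect[of r N c b] r unfolding a_def N_def by simp
  moreover have "c ^ N = c ^ r * c ^ (N - r)"
    using r by (simp add: power_add[symmetric])
  ultimately have "c ^ r * a r = c ^ r * (c ^ (N - r) * a (2 * N - r))"
    by (simp add: mult.assoc)
  then have "a r = c ^ (N - r) * a (2 * N - r)"
    using assms(1) by simp
  moreover have e1: "p - 1 - (r + 1) = N - r" and e2: "p - 2 + (N - r) = 2 * N - r"
    and e3: "p - 2 + (r + 1) = r + (p - 1)"
    using r assms(2) unfolding N_def by simp_all
  moreover have "trinom (p - 2) (int (r + 1)) b c = a (r + (p - 1))"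
    unfolding trinom_of_nat a_def e3 ..
  moreover have "trinom (p - 2) (int (p - 1 - (r + 1))) b c = a (2 * N - r)"
    unfolding trinom_of_nat a_def e1 e2 ..
  ultimately show ?thesis
    unfolding U_fun_def a_def[symmetric] e1 by simp
qed

lemma lucas_u_p_minus_1_cong:
  fixes b c :: int
  assumes "prime p" and "odd p" and "\<not> int p dvd c"
  shows "[2 * c * lucas_u (-b) c (p - 1) - b = - (b\<^sup>2 - 4 * c) * U_fun p b c (p - 1)] (mod int p)"
proof -
  let ?a = "Polynomial.coeff ([:c, b, 1:] ^ (p - 2)) (p - 2)"
  let ?u = "lucas_u (-b) c"
  have p2: "p > 2"
    using odd_prime_gt_2[OF assms(1,2)] .
  have shifts: "p - 2 + 3 = Suc p" "p - 2 + 2 = p" "p - 2 + 1 = p - 1"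
    using p2 by simp_all
  have "[1 = c ^ (p - 2 + 1)] (mod int p)"
    unfolding shifts(3) using fermat_theorem_int[OF assms(1,3)] by (rule cong_sym)
  then have "[(b\<^sup>2 - 4 * c) * 1 * ?a = (b\<^sup>2 - 4 * c) * c ^ (p - 2 + 1) * ?a] (mod int p)"
    by (intro cong_mult cong_refl)
  also have "[(b\<^sup>2 - 4 * c) * c ^ (p - 2 + 1) * ?a = lucas_coeff_form b c (p - 2)] (mod int p)"
    using trinomial_coeff_lucas_cong[OF assms, of "p - 2" b] by simp
  also have "lucas_coeff_form b c (p - 2)
      = int (p - 1) * (2 * ?u (Suc p) + b * ?u p) - 2 * c * ?u (p - 1)"
    by (simp only: lucas_coeff_form_def shifts)
  also have "[\<dots> = (- 1) * (- b) - 2 * c * ?u (p - 1)] (mod int p)"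
  proof (intro cong_diff cong_mult cong_refl)
    show "[int (p - 1) = - 1] (mod int p)"
      using p2 by (simp add: cong_iff_dvd_diff of_nat_diff)
    show "[2 * ?u (Suc p) + b * ?u p = - b] (mod int p)"
      using lucas_u_prime_cong(2)[OF assms(1,2), of "-b" c] by simp
  qed
  finally have "[(b\<^sup>2 - 4 * c) * ?a = b - 2 * c * ?u (p - 1)] (mod int p)"
    by simp
  then have "[- ((b\<^sup>2 - 4 * c) * ?a) = - (b - 2 * c * ?u (p - 1))] (mod int p)"
    by (rule cong_minus_minus_iff[THEN iffD2])
  then have "[2 * c * ?u (p - 1) - b = - ((b\<^sup>2 - 4 * c) * ?a)] (mod int p)"
    by (simp add: cong_sym_eq)
  moreover have "- (b\<^sup>2 - 4 * c) * U_fun p b c (p - 1) = - ((b\<^sup>2 - 4 * c) * ?a)"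
    using U_fun_p_minus_1[of p b c] p2 by (simp add: algebra_simps)
  ultimately show ?thesis
    by (simp only:)
qed

lemma U_fun_p_minus_2_cong:
  fixes b c :: int
  assumes "prime p" and "odd p" and "\<not> int p dvd c"
  shows "[4 * c - b\<^sup>2 + 2 * c * Legendre (b\<^sup>2 - 4 * c) (int p)
           = - (b\<^sup>2 - 4 * c) * U_fun p b c (p - 2)] (mod int p)"
proof -
  let ?a = "Polynomial.coeff ([:c, b, 1:] ^ (p - 2)) (p - 1)"
  let ?u = "lucas_u (-b) c"
  let ?D = "b\<^sup>2 - 4 * c"
  have p2: "p > 2"
    using odd_prime_gt_2[OF assms(1,2)] .
  have shifts: "p - 1 + 3 = p + 2" "p - 1 + 2 = p + 1" "p - 1 + 1 = p"
    using p2 by simp_all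
  have "[c = c ^ (p - 1 + 1)] (mod int p)"
    unfolding shifts(3) using fermat_theorem_int_self[OF assms(1)] by (rule cong_sym)
  then have "[?D * c * ?a = ?D * c ^ (p - 1 + 1) * ?a] (mod int p)"
    by (intro cong_mult cong_refl)
  also have "[?D * c ^ (p - 1 + 1) * ?a = lucas_coeff_form b c (p - 1)] (mod int p)"
    using trinomial_coeff_lucas_cong[OF assms, of "p - 1" b] by simp
  also have "lucas_coeff_form b c (p - 1) = int p * (2 * ?u (p + 2) + b * ?u (p + 1)) - 2 * c * ?u p"
    by (simp only: lucas_coeff_form_def shifts)
  also have "[\<dots> = 0 * (2 * ?u (p + 2) + b * ?u (p + 1)) - 2 * c * ?D ^ ((p - 1) div 2)] (mod int p)"
    using lucas_u_prime_cong(1)[OF assms(1,2), of "-b" c]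
    by (intro cong_diff cong_mult cong_refl) (simp_all add: cong_def)
  also have "[0 * (2 * ?u (p + 2) + b * ?u (p + 1)) - 2 * c * ?D ^ ((p - 1) div 2)
      = 0 * (2 * ?u (p + 2) + b * ?u (p + 1)) - 2 * c * Legendre ?D (int p)] (mod int p)"
    using euler_criterion[OF assms(1) p2, of ?D] by (intro cong_diff cong_mult cong_refl) (rule cong_sym)
  finally have "[?D * c * ?a = - 2 * c * Legendre ?D (int p)] (mod int p)"
    by simp
  then have "[?D + ?D * c * ?a = ?D + - 2 * c * Legendre ?D (int p)] (mod int p)"
    by (rule cong_add[OF cong_refl])
  then have "[- (?D + ?D * c * ?a) = - (?D + - 2 * c * Legendre ?D (int p))] (mod int p)"
    by (rule cong_minus_minus_iff[THEN iffD2])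
  moreover have "- (?D + ?D * c * ?a) = - ?D * U_fun p b c (p - 2)"
    using U_fun_p_minus_2[of p b c] p2 by (simp add: algebra_simps)
  moreover have "- (?D + - 2 * c * Legendre ?D (int p)) = 4 * c - b\<^sup>2 + 2 * c * Legendre ?D (int p)"
    by simp
  ultimately show ?thesis
    by (metis cong_sym)
qed

section \<open>The determinant modulo \<open>p\<close>\<close>

lemma det_cong:
  fixes A B :: "int mat"
  assumes "A \<in> carrier_mat n n" and "B \<in> carrier_mat n n"
    and "\<And>i j. i < n \<Longrightarrow> j < n \<Longrightarrow> [A $$ (i, j) = B $$ (i, j)] (mod m)"
  shows "[det A = det B] (mod m)"
  unfolding det_def'[OF assms(1)] det_def'[OF assms(2)]
proof (rule cong_sum)
  fix \<pi> assume "\<pi> \<in> {\<pi>. \<pi> permutes {0..<n}}"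
  then have "\<pi> i < n" if "i < n" for i
    using permutes_in_image that by fastforce
  then show "[signof \<pi> * (\<Prod>i = 0..<n. A $$ (i, \<pi> i)) = signof \<pi> * (\<Prod>i = 0..<n. B $$ (i, \<pi> i))] (mod m)"
    using assms(3) by (intro cong_mult cong_refl cong_prod) simp
qed

lemma det_mat_diag: "det (mat_diag n f) = (\<Prod>i<n. f i)"
  for f :: "nat \<Rightarrow> 'a :: comm_ring_1"
proof -
  have "det (mat_diag n f) = prod_list (diag_mat (mat_diag n f))"
    by (rule det_upper_triangular) (auto simp: mat_diag_def intro!: upper_triangularI)
  also have "diag_mat (mat_diag n f) = map f [0..<n]"
    by (simp add: diag_mat_def mat_diag_def)
  finally show ?thesis
    by (simp add: prod.distinct_set_conv_list[symmetric] atLeast0LessThan)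
qed

definition cyclic_shift :: "nat \<Rightarrow> nat \<Rightarrow> nat" where
  "cyclic_shift n r = (if r < n then (r + 1) mod n else r)"

lemma cyclic_shift_permutes:
  assumes "n > 0"
  shows "cyclic_shift n permutes {0..<n}"
proof (rule bij_imp_permutes)
  show "bij_betw (cyclic_shift n) {0..<n} {0..<n}"
  proof (rule bij_betwI[where g = "\<lambda>r. (r + (n - 1)) mod n"])
    fix r assume r: "r \<in> {0..<n}"
    have "((r + 1) mod n + (n - 1)) mod n = (r + 1 + (n - 1)) mod n"
      by (simp add: mod_add_left_eq)
    also have "r + 1 + (n - 1) = r + n"
      using assms by simp
    finally show "(cyclic_shift n r + (n - 1)) mod n = r"
      using r by (simp add: cyclic_shift_def)
    have "((r + (n - 1)) mod n + 1) mod n = (r + (n - 1) + 1) mod n"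
      by (simp add: mod_Suc_eq)
    also have "r + (n - 1) + 1 = r + n"
      using assms by simp
    finally show "cyclic_shift n ((r + (n - 1)) mod n) = r"
      using r assms by (simp add: cyclic_shift_def)
  qed (use assms in \<open>auto simp: cyclic_shift_def\<close>)
qed (simp add: cyclic_shift_def)

lemma cyclic_shift_twice: "r < n \<Longrightarrow> cyclic_shift n (cyclic_shift n r) = (r + 2) mod n"
  by (simp add: cyclic_shift_def mod_Suc_eq)

lemma signof_cyclic_shift_twice:
  assumes "n > 0"
  shows "signof (cyclic_shift n \<circ> cyclic_shift n) = (1 :: int)"
proof -
  have "signof (cyclic_shift n \<circ> cyclic_shift n) = signof (cyclic_shift n) * (signof (cyclic_shift n) :: int)"
    by (rule signof_compose[OF cyclic_shift_permutes[OF assms] cyclic_shift_permutes[OF assms]])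
  then show ?thesis
    by (simp add: sign_def)
qed

text \<open>Reducing modulo \<open>p - 1\<close> the exponent of \<open>y\<close> in the monomial \<open>x^r y^(2(p-2)-r)\<close> gives
  \<open>dual_exponent (p - 1) r\<close>.\<close>

definition dual_exponent :: "nat \<Rightarrow> nat \<Rightarrow> nat" where
  "dual_exponent n r = (2 * n - 2 - r) mod n"

lemma dvd_dual_exponent_add_iff:
  assumes "n \<ge> 2" and "r < n" and "s < n"
  shows "n dvd dual_exponent n r + s \<longleftrightarrow> (r + 2) mod n = s"
proof -
  have "n dvd dual_exponent n r + s \<longleftrightarrow> [(2 * n - 2 - r + s) + (r + 2) = 0 + (r + 2)] (mod n)"
    unfolding cong_add_rcancel_nat by (simp add: dual_exponent_def cong_0_iff dvd_eq_mod_eq_0 mod_add_left_eq)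
  also have "(2 * n - 2 - r + s) + (r + 2) = s + n * 2"
    using assms by simp
  finally show ?thesis
    using assms(3) by (auto simp: cong_def)
qed

lemma sum_lessThan_add_self: "(\<Sum>m<n + n. f m) = (\<Sum>r<n. f r + f (r + n))"
  for f :: "nat \<Rightarrow> 'a :: comm_monoid_add"
proof -
  have "(\<Sum>m<n + n. f m) = (\<Sum>m\<in>{0..<n}. f m) + (\<Sum>m\<in>{n..<n + n}. f m)"
    by (simp add: atLeast0LessThan[symmetric] sum.atLeastLessThan_concat)
  also have "(\<Sum>m\<in>{n..<n + n}. f m) = (\<Sum>r\<in>{0..<n}. f (r + n))"
    using sum.shift_bounds_nat_ivl[of f 0 n n] by simp
  finally show ?thesis
    by (simp add: atLeast0LessThan sum.distrib)
qed

lemma trinomial_form_power_cong: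
  fixes b c x y :: int
  assumes "prime p" and "odd p" and "\<not> int p dvd c" and "\<not> int p dvd x" and "\<not> int p dvd y"
  shows "[(x\<^sup>2 + b * x * y + c * y\<^sup>2) ^ (p - 2)
           = (\<Sum>r<p - 1. x ^ r * (U_fun p b c (r + 1) * y ^ dual_exponent (p - 1) r))] (mod int p)"
proof -
  define a where "a = Polynomial.coeff ([:c, b, 1:] ^ (p - 2))"
  define n where "n = p - 1"
  define f where "f m = a m * x ^ m * y ^ (2 * (p - 2) - m)" for m
  have p3: "p \<ge> 3"
    using odd_prime_gt_2[OF assms(1,2)] by simp
  have n: "n + n = Suc (Suc (2 * (p - 2)))" and "2 * n - 2 = 2 * (p - 2)"
    using p3 unfolding n_def by simp_all
  then have dual: "dual_exponent n r = (2 * (p - 2) - r) mod n" for r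
    by (simp add: dual_exponent_def)
  have "(x\<^sup>2 + b * x * y + c * y\<^sup>2) ^ (p - 2) = (\<Sum>m\<le>2 * (p - 2). f m)"
    unfolding f_def a_def using assms(3,4) by (intro trinomial_form_power) auto
  also have "\<dots> = (\<Sum>m<n + n. f m)"
    unfolding n using coeff_trinomial_power_eq_0[of "p - 2" "Suc (2 * (p - 2))" c b]
    by (simp add: lessThan_Suc_atMost f_def a_def)
  also have "\<dots> = (\<Sum>r<n. f r + f (r + n))"
    by (rule sum_lessThan_add_self)
  also have "[\<dots> = (\<Sum>r<n. x ^ r * (U_fun p b c (r + 1) * y ^ dual_exponent n r))] (mod int p)"
  proof (rule cong_sum)
    fix r assume "r \<in> {..<n}"
    then have r: "r < n"
      by simp
    let ?Y = "y ^ dual_exponent n r"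
    have "[y ^ (2 * (p - 2) - r) = y ^ ((2 * (p - 2) - r) mod n)] (mod int p)"
      unfolding n_def by (rule power_cong_mod_prime_minus_1[OF assms(1,5)])
    then have low: "[f r = a r * x ^ r * ?Y] (mod int p)"
      unfolding f_def dual by (intro cong_mult cong_refl)
    have high: "[f (r + n) = a (r + n) * x ^ r * ?Y] (mod int p)"
    proof (cases "r + n \<le> 2 * (p - 2)")
      case True
      have "[x ^ (r + n) = x ^ ((r + n) mod n)] (mod int p)"
        unfolding n_def by (rule power_cong_mod_prime_minus_1[OF assms(1,4)])
      moreover have "[y ^ (2 * (p - 2) - (r + n)) = y ^ ((2 * (p - 2) - (r + n)) mod n)] (mod int p)"
        unfolding n_def by (rule power_cong_mod_prime_minus_1[OF assms(1,5)])
      moreover have "2 * (p - 2) - r = (2 * (p - 2) - (r + n)) + n"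
        using True by simp
      then have "(2 * (p - 2) - (r + n)) mod n = dual_exponent n r"
        unfolding dual by simp
      ultimately show ?thesis
        unfolding f_def using r by (intro cong_mult cong_refl) simp_all
    next
      case False
      then have "a (r + n) = 0"
        unfolding a_def by (intro coeff_trinomial_power_eq_0) simp
      then show ?thesis
        unfolding f_def by simp
    qed
    have "U_fun p b c (r + 1) = a r + a (r + n)"
      unfolding a_def n_def using assms(3) p3 r n_def by (intro U_fun_eq_coeff_sum) auto
    then show "[f r + f (r + n) = x ^ r * (U_fun p b c (r + 1) * ?Y)] (mod int p)"
      using cong_add[OF low high] by (simp add: algebra_simps)
  qed
  finally show ?thesis
    unfolding n_def .
qed

definition power_mat :: "nat \<Rightarrow> (nat \<Rightarrow> nat) \<Rightarrow> int mat" where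
  "power_mat n e = mat n n (\<lambda>(i, r). int (i + 1) ^ e r)"

lemma power_mat_carrier [simp]: "power_mat n e \<in> carrier_mat n n"
  by (simp add: power_mat_def)

text \<open>Entry \<open>(r, s)\<close> of \<open>W V\<close> below is the power sum \<open>\<Sum>\<^sub>j j^(dual_exponent n r + s)\<close>, which is
  \<open>-1\<close> modulo \<open>p\<close> if \<open>s = (r + 2) mod n\<close> and \<open>0\<close> otherwise; so \<open>W V\<close> is congruent to minus the
  matrix of the square of a cyclic shift.\<close>

lemma det_power_mat_dual_cong:
  assumes "prime p" and "odd p"
  shows "[det (power_mat (p - 1) (dual_exponent (p - 1))) * det (power_mat (p - 1) id) = 1] (mod int p)"
proof -
  define n where "n = p - 1"
  define \<sigma> where "\<sigma> = cyclic_shift n \<circ> cyclic_shift n"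
  define W where "W = transpose_mat (power_mat n (dual_exponent n))"
  define V where "V = power_mat n id"
  define P where "P = mat n n (\<lambda>(r, s). (1\<^sub>m n :: int mat) $$ (\<sigma> r, s))"
  have n2: "n \<ge> 2" and "even n"
    using odd_prime_gt_2[OF assms] assms(2) unfolding n_def by simp_all
  have carrier: "W \<in> carrier_mat n n" "V \<in> carrier_mat n n" "P \<in> carrier_mat n n"
    by (simp_all add: W_def V_def P_def)
  have "\<sigma> permutes {0..<n}"
    unfolding \<sigma>_def using n2 by (simp add: cyclic_shift_permutes permutes_compose)
  then have "det P = signof \<sigma> * det (1\<^sub>m n :: int mat)"
    unfolding P_def by (rule det_permute_rows[OF one_carrier_mat])
  then have "det P = 1"
    unfolding \<sigma>_def using n2 signof_cyclic_shift_twice by simp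
  then have det_P: "det ((-1) \<cdot>\<^sub>m P) = 1"
    using \<open>even n\<close> carrier(3) by simp
  have "[det (W * V) = det ((-1) \<cdot>\<^sub>m P)] (mod int p)"
  proof (rule det_cong)
    fix r s assume r: "r < n" and s: "s < n"
    have "(W * V) $$ (r, s) = (\<Sum>j = 0..<n. int (j + 1) ^ dual_exponent n r * int (j + 1) ^ s)"
      using r s unfolding W_def V_def power_mat_def by (simp add: scalar_prod_def)
    also have "\<dots> = (\<Sum>j<p - 1. (int j + 1) ^ (dual_exponent n r + s))"
      unfolding n_def atLeast0LessThan by (simp add: power_add ac_simps)
    finally have entry: "(W * V) $$ (r, s) = (\<Sum>j<p - 1. (int j + 1) ^ (dual_exponent n r + s))" .
    have "\<sigma> r < n"
      using r n2 unfolding \<sigma>_def by (simp add: cyclic_shift_twice)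
    then have "((-1) \<cdot>\<^sub>m P) $$ (r, s) = (if (p - 1) dvd (dual_exponent n r + s) then -1 else 0)"
      using r s dvd_dual_exponent_add_iff[OF n2 r s]
      unfolding P_def \<sigma>_def n_def[symmetric] by (auto simp: cyclic_shift_twice)
    then show "[(W * V) $$ (r, s) = ((-1) \<cdot>\<^sub>m P) $$ (r, s)] (mod int p)"
      unfolding entry using sum_powers_mod_prime[OF assms(1)] by simp
  qed (use carrier in simp_all)
  then have "[det W * det V = 1] (mod int p)"
    using det_P det_mult[OF carrier(1,2)] by simp
  then show ?thesis
    unfolding W_def V_def n_def by (simp add: det_transpose[OF power_mat_carrier])
qed

lemma D_det_cong_prod:
  assumes "prime p" and "odd p" and "\<not> int p dvd c"
  shows "[D_det p b c = (\<Prod>r<p - 1. U_fun p b c (r + 1))] (mod int p)"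
proof -
  define n where "n = p - 1"
  define A where "A r = U_fun p b c (r + 1)" for r
  define V where "V = power_mat n id"
  define W where "W = transpose_mat (power_mat n (dual_exponent n))"
  have carrier: "V \<in> carrier_mat n n" "W \<in> carrier_mat n n"
    by (simp_all add: V_def W_def)
  have "[D_det p b c = det (V * mat_diag n A * W)] (mod int p)"
    unfolding D_det_def n_def[symmetric]
  proof (rule det_cong)
    fix i j assume i: "i < n" and j: "j < n"
    have "V * mat_diag n A = mat n n (\<lambda>(i, r). V $$ (i, r) * A r)"
      by (rule mat_diag_mult_right[OF carrier(1)])
    then have "(V * mat_diag n A * W) $$ (i, j)
        = (\<Sum>r = 0..<n. int (i + 1) ^ r * A r * int (j + 1) ^ dual_exponent n r)"
      using i j unfolding W_def by (simp add: V_def power_mat_def scalar_prod_def)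
    also have "\<dots> = (\<Sum>r<p - 1. int (i + 1) ^ r * (U_fun p b c (r + 1) * int (j + 1) ^ dual_exponent (p - 1) r))"
      unfolding A_def n_def atLeast0LessThan by (simp add: mult.assoc)
    finally have entry: "(V * mat_diag n A * W) $$ (i, j) = \<dots>" .
    have "\<not> int p dvd int (i + 1)" and "\<not> int p dvd int (j + 1)"
      using i j unfolding n_def by (auto dest!: zdvd_imp_le)
    then show "[(mat n n (\<lambda>(i, j). (int (i+1)^2 + b * int (i+1) * int (j+1)
        + c * int (j+1)^2) ^ (p - 2))) $$ (i, j) = (V * mat_diag n A * W) $$ (i, j)] (mod int p)"
      unfolding entry using i j trinomial_form_power_cong[OF assms] by simp
  qed (use carrier in \<open>simp_all add: mult_carrier_mat[of _ n n]\<close>)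
  also have "det (V * mat_diag n A * W) = (\<Prod>r<n. A r) * (det W * det V)"
    using carrier by (simp add: det_mult[of _ n] det_mat_diag)
  also have "[(\<Prod>r<n. A r) * (det W * det V) = (\<Prod>r<n. A r) * 1] (mod int p)"
    using det_power_mat_dual_cong[OF assms(1,2)]
    unfolding V_def W_def n_def by (intro cong_mult cong_refl) (simp add: det_transpose[OF power_mat_carrier])
  finally show ?thesis
    unfolding A_def n_def by simp
qed

section \<open>Pairing the factors\<close>

lemma prod_lessThan_double_pairs:
  fixes f :: "nat \<Rightarrow> 'a :: comm_monoid_mult"
  assumes "m \<ge> 1"
  shows "(\<Prod>r<2 * m. f (r + 1)) = f (2 * m) * f m * (\<Prod>k\<in>{1..m - 1}. f k * f (2 * m - k))"
proof -
  have "(\<Prod>r<2 * m. f (r + 1)) = (\<Prod>k\<in>{1..2 * m}. f k)"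
    by (rule prod.reindex_bij_witness[of _ "\<lambda>k. k - 1" Suc]) auto
  also have "{1..2 * m} = insert (2 * m) (insert m ({1..m - 1} \<union> {m + 1..2 * m - 1}))"
    using assms by auto
  also have "(\<Prod>k\<in>\<dots>. f k) = f (2 * m) * f m * (\<Prod>k\<in>{1..m - 1}. f k) * (\<Prod>k\<in>{m + 1..2 * m - 1}. f k)"
  proof -
    have "2 * m \<notin> insert m ({1..m - 1} \<union> {m + 1..2 * m - 1})"
      and "m \<notin> {1..m - 1} \<union> {m + 1..2 * m - 1}" and "{1..m - 1} \<inter> {m + 1..2 * m - 1} = {}"
      using assms by auto
    then show ?thesis
      by (simp add: prod.union_disjoint mult_ac)
  qed
  also have "(\<Prod>k\<in>{m + 1..2 * m - 1}. f k) = (\<Prod>k\<in>{1..m - 1}. f (2 * m - k))"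
    by (rule prod.reindex_bij_witness[of _ "\<lambda>k. 2 * m - k" "\<lambda>k. 2 * m - k"]) auto
  finally show ?thesis
    by (simp add: prod.distrib mult_ac)
qed

lemma pairing_exponent:
  "(2 * m) * (2 * m - 2) div 8 + (\<Sum>k\<in>{1..m - 1}. 2 * m - k) = 2 * (m * (m - 1 :: nat))"
proof (cases m)
  case (Suc l)
  have "(\<Sum>k\<in>{1..m - 1}. k) = (\<Sum>k\<le>l. k)"
    using Suc sum_shift_lb_Suc0_0[of "\<lambda>k. k" l] by (simp add: atLeast0AtMost)
  then have gauss: "(\<Sum>k\<in>{1..m - 1}. k) = l * (l + 1) div 2"
    using gauss_sum_nat[of l] by (simp add: atLeast0AtMost mult.commute)
  have "(2 * m) * (2 * m - 2) div 8 = l * (l + 1) div 2"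
  proof -
    have "(2 * m) * (2 * m - 2) = (l * (l + 1)) * 4"
      using Suc by (simp add: algebra_simps)
    then show ?thesis
      by simp
  qed
  moreover have "(\<Sum>k\<in>{1..m - 1}. 2 * m - k) + (\<Sum>k\<in>{1..m - 1}. k) = (\<Sum>k\<in>{1..m - 1}. 2 * m)"
    by (subst sum.distrib[symmetric]) (rule sum.cong, auto)
  ultimately show ?thesis
    using gauss Suc by (simp add: algebra_simps)
qed simp

lemma Legendre_D_det_pairing:
  fixes b c :: int
  assumes "prime p" and "odd p" and "\<not> int p dvd c"
    and nonzero: "\<forall>k\<in>{2..p - 2}. \<not> [U_fun p b c k = 0] (mod int p)"
  shows "Legendre c (int p) ^ ((p - 1) * (p - 3) div 8) * Legendre (D_det p b c) (int p)
           = Legendre (U_fun p b c (p - 1)) (int p) * Legendre (U_fun p b c ((p - 1) div 2)) (int p)"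
proof -
  define L where "L x = Legendre x (int p)" for x
  define U where "U = U_fun p b c"
  define m where "m = (p - 1) div 2"
  have p2: "p > 2"
    using odd_prime_gt_2[OF assms(1,2)] .
  have p: "p = 2 * m + 1" and m: "m \<ge> 1"
    using assms(2) p2 unfolding m_def by (auto elim!: oddE)
  have Lc: "L c * L c = 1"
    using assms(3) unfolding L_def by (simp add: Legendre_mult_self cong_0_iff)
  have pair: "L (U k) * L (U (2 * m - k)) = L c ^ (2 * m - k)" if "k \<in> {1..m - 1}" for k
  proof -
    have "k \<le> p - 1" and "p - 1 - k = 2 * m - k"
      using that p by auto
    then have "[U k = c ^ (2 * m - k) * U (2 * m - k)] (mod int p)"
      using U_fun_reflect_cong[OF assms(1,3), of k b] unfolding U_def by simp
    then have "L (U k) = L c ^ (2 * m - k) * L (U (2 * m - k))"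
      unfolding L_def using Legendre_cong Legendre_mult[OF assms(1) p2] Legendre_power[OF assms(1) p2]
      by metis
    moreover have "2 * m - k \<in> {2..p - 2}"
      using that p by auto
    then have "L (U (2 * m - k)) * L (U (2 * m - k)) = 1"
      using nonzero unfolding L_def U_def by (simp add: Legendre_mult_self)
    ultimately show ?thesis
      by (simp add: mult_ac)
  qed
  have "L (D_det p b c) = (\<Prod>r<2 * m. L (U (r + 1)))"
    using Legendre_cong[OF D_det_cong_prod[OF assms(1-3)]]
      Legendre_prod[OF assms(1) p2, of "{..<2 * m}" "\<lambda>r. U (r + 1)"]
    unfolding L_def U_def p by simp
  also have "\<dots> = L (U (2 * m)) * L (U m) * (\<Prod>k\<in>{1..m - 1}. L (U k) * L (U (2 * m - k)))"
    using prod_lessThan_double_pairs[OF m, of "\<lambda>k. L (U k)"] by simp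
  also have "\<dots> = L (U (p - 1)) * L (U m) * L c ^ (\<Sum>k\<in>{1..m - 1}. 2 * m - k)"
    using pair p by (simp add: power_sum)
  finally have "L c ^ ((p - 1) * (p - 3) div 8) * L (D_det p b c)
      = L c ^ (2 * (m * (m - 1))) * (L (U (p - 1)) * L (U m))"
    unfolding pairing_exponent[of m, symmetric] p by (simp add: power_add mult_ac)
  also have "L c ^ (2 * (m * (m - 1))) = 1"
    using Lc by (simp add: power_mult power2_eq_square)
  finally show ?thesis
    unfolding L_def U_def m_def by simp
qed

lemma Legendre_lucas_factors:
  fixes b c :: int
  assumes "prime p" and "odd p" and "\<not> int p dvd c" and "\<not> int p dvd b\<^sup>2 - 4 * c"
    and nonzero: "\<forall>k\<in>{2..p - 2}. \<not> [U_fun p b c k = 0] (mod int p)"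
  shows "Legendre (4 * c - b\<^sup>2 + 2 * c * Legendre (b\<^sup>2 - 4 * c) (int p)) (int p)
           * Legendre (2 * c * lucas_u (-b) c (p - 1) - b) (int p)
           * Legendre (U_fun p b c (p - 2) * U_fun p b c ((p - 1) div 2)) (int p)
         = Legendre (U_fun p b c (p - 1)) (int p) * Legendre (U_fun p b c ((p - 1) div 2)) (int p)"
proof -
  define L where "L x = Legendre x (int p)" for x
  define U where "U = U_fun p b c"
  define m where "m = (p - 1) div 2"
  have p2: "p > 2"
    using odd_prime_gt_2[OF assms(1,2)] .
  note mult = Legendre_mult[OF assms(1) p2]
  have "\<not> [- (b\<^sup>2 - 4 * c) = 0] (mod int p)"
    using assms(4) unfolding cong_0_iff dvd_minus_iff .
  then have "L (- (b\<^sup>2 - 4 * c)) * L (- (b\<^sup>2 - 4 * c)) = 1"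
    unfolding L_def by (rule Legendre_mult_self)
  moreover have "L (U (p - 2)) * L (U (p - 2)) * L (U m) = L (U m)"
  proof (cases "p = 3")
    case True
    then show ?thesis
      using Legendre_cases[of "U m" "int p"] unfolding L_def m_def by auto
  next
    case False
    then have "p - 2 \<in> {2..p - 2}"
      using p2 by auto
    then show ?thesis
      using nonzero unfolding L_def U_def by (simp add: Legendre_mult_self)
  qed
  ultimately show ?thesis
    using Legendre_cong[OF U_fun_p_minus_2_cong[OF assms(1-3)]]
      Legendre_cong[OF lucas_u_p_minus_1_cong[OF assms(1-3)]]
    unfolding L_def U_def m_def by (simp add: mult mult_ac)
qed

theorem lemma4p3:
  fixes p :: nat and b c :: int
  assumes "prime p" and "odd p" and "\<not> int p dvd c * (b^2 - 4*c)"
  shows "((\<exists>k\<in>{2..p-2}. [U_fun p b c k = 0] (mod int p)) \<longrightarrow>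
            Legendre (D_det p b c) (int p) = 0)
       \<and> ((\<forall>k\<in>{2..p-2}. \<not> [U_fun p b c k = 0] (mod int p)) \<longrightarrow>
            (Legendre c (int p)) ^ ((p - 1) * (p - 3) div 8) * Legendre (D_det p b c) (int p)
            = Legendre (4*c - b^2 + 2*c * Legendre (b^2 - 4*c) (int p)) (int p)
              * Legendre (2*c * lucas_u (-b) c (p - 1) - b) (int p)
              * Legendre (U_fun p b c (p - 2) * U_fun p b c ((p - 1) div 2)) (int p))"
proof -
  have "prime (int p)"
    using assms(1) by simp
  then have c: "\<not> int p dvd c" and disc: "\<not> int p dvd b\<^sup>2 - 4 * c"
    using assms(3) prime_dvd_mult_iff by blast+
  show ?thesis
  proof (intro conjI impI)
    assume "\<exists>k\<in>{2..p - 2}. [U_fun p b c k = 0] (mod int p)"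
    then obtain k where k: "k \<in> {2..p - 2}" and "int p dvd U_fun p b c k"
      by (auto simp: cong_0_iff)
    moreover have "k - 1 \<in> {..<p - 1}" and "k - 1 + 1 = k"
      using k by auto
    then have "U_fun p b c k dvd (\<Prod>r<p - 1. U_fun p b c (r + 1))"
      using dvd_prodI[of "{..<p - 1}" "k - 1" "\<lambda>r. U_fun p b c (r + 1)"] by simp
    ultimately have "[D_det p b c = 0] (mod int p)"
      using D_det_cong_prod[OF assms(1,2) c] by (metis cong_0_iff cong_dvd_iff dvd_trans)
    then show "Legendre (D_det p b c) (int p) = 0"
      by (simp add: Legendre_eq_0_iff)
  next
    assume "\<forall>k\<in>{2..p - 2}. \<not> [U_fun p b c k = 0] (mod int p)"
    then show "Legendre c (int p) ^ ((p - 1) * (p - 3) div 8) * Legendre (D_det p b c) (int p)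
        = Legendre (4*c - b^2 + 2*c * Legendre (b^2 - 4*c) (int p)) (int p)
          * Legendre (2*c * lucas_u (-b) c (p - 1) - b) (int p)
          * Legendre (U_fun p b c (p - 2) * U_fun p b c ((p - 1) div 2)) (int p)"
      using Legendre_D_det_pairing[OF assms(1,2) c] Legendre_lucas_factors[OF assms(1,2) c disc] by simp
  qed
qed

end
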